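(* Let $(S,K,I)$ be a homogeneous split graph and $\Phi=\Phi(S)$. Then: (1) for distinct $u,v\in I$, $\sigma_{uv}(S)=0$ if and only if $u$ and $v$ are twins in $S$; (2) $\sigma_{uv}(S)$ is a perfect square for every pair of distinct $u,v\in I$; (3) $\deg(S)\ge1$; in particular, if $d$ denotes the common degree in $S$ of the vertices of $I$, then $d\notin\{0,|K|\}$; (4) $\Phi$ has no induced subgraph isomorphic to $K_2\,\dot\cup\,K_1$; (5) $\operatorname{diam}(\Phi)\le 2$ (in particular $\Phi$ is connected); (6) $\Phi$ contains no induced cycle of length $5$ or more.
   Context: All graphs are finite and simple. A split graph is a graph $S$ whose vertex set is a disjoint union $V(S)=K\,\dot\cup\,I$ with $K$ a clique and $I$ an independent set; $(K,I)$ is called a bipartition of $S$, and $(S,K,I)$ denotes $S$ together with this fixed bipartition. For a split graph $(S,K,I)$ and distinct $u,v\in I$, $\sigma_{uv}(S)$ is the number of induced subgraphs of $S$ isomorphic to $P_4$ containing both $u$ and $v$. The factor graph $\Phi(S)$ is the loopless multigraph with vertex set $I$ having exactly $\sigma_{uv}(S)$ parallel edges between $u$ and $v$. Graph notions (connected, complete, clique, diameter, induced subgraph, etc.) applied to $\Phi(S)$ refer to its underlying simple graph, in which $u\sim v$ iff $\sigma_{uv}(S)\ge1$. $\deg(S)$ denotes the number of induced subgraphs of $S$ isomorphic to $P_4$ (equivalently the number of edges of $\Phi(S)$ counted with multiplicity). Two vertices $u,v$ of a graph $G$ are twins if $N_G(u)\setminus\{v\}=N_G(v)\setminus\{u\}$.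 A vertex $w$ of $(S,K,I)$ is swing if $N_S(w)=K\setminus\{w\}$. $(S,K,I)$ is balanced if $|K|=\omega(S)$ and $|I|=\alpha(S)$; it is known that $S$ is balanced iff it has no swing vertex. $(S,K,I)$ is homogeneous if it is balanced and all vertices of $I$ have the same degree in $S$. *)

theory Defs
  imports Main
begin

text \<open>A finite simple graph is given by a finite vertex set V and a symmetric,
irreflexive adjacency relation E (only its restriction to V matters).\<close>

definition simple_graph :: "'a set \<Rightarrow> ('a \<Rightarrow> 'a \<Rightarrow> bool) \<Rightarrow> bool" where
  "simple_graph V E \<longleftrightarrow> finite V \<and> (\<forall>x y. E x y \<longrightarrow> E y x) \<and> (\<forall>x. \<not> E x x)"

definition is_clique :: "('a \<Rightarrow> 'a \<Rightarrow> bool) \<Rightarrow> 'a set \<Rightarrow> bool" where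
  "is_clique E C \<longleftrightarrow> (\<forall>x\<in>C. \<forall>y\<in>C. x \<noteq> y \<longrightarrow> E x y)"

definition is_indep :: "('a \<Rightarrow> 'a \<Rightarrow> bool) \<Rightarrow> 'a set \<Rightarrow> bool" where
  "is_indep E A \<longleftrightarrow> (\<forall>x\<in>A. \<forall>y\<in>A. \<not> E x y)"

definition clique_number :: "'a set \<Rightarrow> ('a \<Rightarrow> 'a \<Rightarrow> bool) \<Rightarrow> nat" where
  "clique_number V E = Max (card ` {C. C \<subseteq> V \<and> is_clique E C})"

definition indep_number :: "'a set \<Rightarrow> ('a \<Rightarrow> 'a \<Rightarrow> bool) \<Rightarrow> nat" where
  "indep_number V E = Max (card ` {A. A \<subseteq> V \<and> is_indep E A})"

definition nbhd :: "'a set \<Rightarrow> ('a \<Rightarrow> 'a \<Rightarrow> bool) \<Rightarrow> 'a \<Rightarrow> 'a set" where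
  "nbhd V E v = {w \<in> V. E v w}"

definition vdeg :: "'a set \<Rightarrow> ('a \<Rightarrow> 'a \<Rightarrow> bool) \<Rightarrow> 'a \<Rightarrow> nat" where
  "vdeg V E v = card (nbhd V E v)"

definition split_graph :: "'a set \<Rightarrow> ('a \<Rightarrow> 'a \<Rightarrow> bool) \<Rightarrow> 'a set \<Rightarrow> 'a set \<Rightarrow> bool" where
  "split_graph V E K I \<longleftrightarrow> simple_graph V E \<and> V = K \<union> I \<and> K \<inter> I = {}
      \<and> is_clique E K \<and> is_indep E I"

definition balanced :: "'a set \<Rightarrow> ('a \<Rightarrow> 'a \<Rightarrow> bool) \<Rightarrow> 'a set \<Rightarrow> 'a set \<Rightarrow> bool" where
  "balanced V E K I \<longleftrightarrow> card K = clique_number V E \<and> card I = indep_number V E"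

definition homogeneous :: "'a set \<Rightarrow> ('a \<Rightarrow> 'a \<Rightarrow> bool) \<Rightarrow> 'a set \<Rightarrow> 'a set \<Rightarrow> bool" where
  "homogeneous V E K I \<longleftrightarrow> balanced V E K I \<and> (\<exists>d. \<forall>v\<in>I. vdeg V E v = d)"

definition induces_P4 :: "('a \<Rightarrow> 'a \<Rightarrow> bool) \<Rightarrow> 'a set \<Rightarrow> bool" where
  "induces_P4 E X \<longleftrightarrow> (\<exists>a b c d. X = {a, b, c, d} \<and> distinct [a, b, c, d]
      \<and> E a b \<and> E b c \<and> E c d \<and> \<not> E a c \<and> \<not> E a d \<and> \<not> E b d)"

definition P4_sets :: "'a set \<Rightarrow> ('a \<Rightarrow> 'a \<Rightarrow> bool) \<Rightarrow> 'a set set" where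
  "P4_sets V E = {X. X \<subseteq> V \<and> induces_P4 E X}"

definition sigma :: "'a set \<Rightarrow> ('a \<Rightarrow> 'a \<Rightarrow> bool) \<Rightarrow> 'a \<Rightarrow> 'a \<Rightarrow> nat" where
  "sigma V E u v = card {X \<in> P4_sets V E. u \<in> X \<and> v \<in> X}"

definition split_deg :: "'a set \<Rightarrow> ('a \<Rightarrow> 'a \<Rightarrow> bool) \<Rightarrow> nat" where
  "split_deg V E = card (P4_sets V E)"

text \<open>Adjacency in the underlying simple graph of the factor graph Phi(S) (vertex set I).\<close>
definition phi_adj :: "'a set \<Rightarrow> ('a \<Rightarrow> 'a \<Rightarrow> bool) \<Rightarrow> 'a \<Rightarrow> 'a \<Rightarrow> bool" where
  "phi_adj V E u v \<longleftrightarrow> u \<noteq> v \<and> sigma V E u v \<ge> 1"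

definition twins :: "'a set \<Rightarrow> ('a \<Rightarrow> 'a \<Rightarrow> bool) \<Rightarrow> 'a \<Rightarrow> 'a \<Rightarrow> bool" where
  "twins V E u v \<longleftrightarrow> nbhd V E u - {v} = nbhd V E v - {u}"

definition induced_cycle :: "('a \<Rightarrow> 'a \<Rightarrow> bool) \<Rightarrow> 'a list \<Rightarrow> bool" where
  "induced_cycle A cs \<longleftrightarrow> distinct cs \<and>
     (\<forall>i<length cs. \<forall>j<length cs. i \<noteq> j \<longrightarrow>
        (A (cs ! i) (cs ! j) \<longleftrightarrow> j = Suc i mod length cs \<or> i = Suc j mod length cs))"

end

theory Submission imports Defs begin

text \<open>For distinct \<open>u, v \<in> I\<close> of a split graph, the induced \<open>P\<^sub>4\<close>'s through \<open>u\<close> and \<open>v\<close> are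
exactly the paths \<open>u - x - y - v\<close> with \<open>x \<in> N(u) - N(v)\<close> and \<open>y \<in> N(v) - N(u)\<close>, so
\<open>\<sigma>\<^sub>u\<^sub>v = |N(u) - N(v)| \<cdot> |N(v) - N(u)|\<close>. If \<open>u\<close> and \<open>v\<close> have the same degree, both factors
are equal, so \<open>\<sigma>\<^sub>u\<^sub>v\<close> is a square which vanishes iff \<open>N(u) = N(v)\<close>, i.e. iff \<open>u, v\<close> are
twins. Hence \<open>\<Phi>\<close> is the complete multipartite graph whose parts are the classes of
vertices of \<open>I\<close> with equal neighbourhoods; such a graph has no induced \<open>K\<^sub>2 \<union> K\<^sub>1\<close> and no
long induced cycle, and it has diameter at most 2 as soon as there are two parts. That
there are two parts, and that the common degree is neither \<open>0\<close> nor \<open>|K|\<close>, follows from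
the absence of swing vertices in a balanced split graph.\<close>

lemma split_graph_finite:
  assumes "split_graph V E K I"
  shows "finite V" "finite K" "finite I"
  using assms unfolding split_graph_def simple_graph_def by auto

lemma split_graph_nbhd_subset_K:
  assumes "split_graph V E K I" "u \<in> I"
  shows "nbhd V E u \<subseteq> K"
  using assms unfolding split_graph_def nbhd_def is_indep_def by blast

lemma split_graph_finite_nbhd:
  assumes "split_graph V E K I"
  shows "finite (nbhd V E u)"
  using assms unfolding split_graph_def simple_graph_def nbhd_def by auto

lemma card_le_clique_number:
  assumes "finite V" "C \<subseteq> V" "is_clique E C"
  shows "card C \<le> clique_number V E"
  unfolding clique_number_def
  using assms by (intro Max_ge) (auto intro: finite_subset[of _ "Pow V"])

lemma card_le_indep_number:
  assumes "finite V" "A \<subseteq> V" "is_indep E A"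
  shows "card A \<le> indep_number V E"
  unfolding indep_number_def
  using assms by (intro Max_ge) (auto intro: finite_subset[of _ "Pow V"])

subsection \<open>Balanced split graphs have no swing vertex\<close>

lemma balanced_obtain_non_neighbour_in_K:
  assumes sp: "split_graph V E K I" and ba: "balanced V E K I" and "v \<in> I"
  obtains k where "k \<in> K" "\<not> E v k"
proof -
  have "\<not> is_clique E (insert v K)"
  proof
    assume "is_clique E (insert v K)"
    moreover have "insert v K \<subseteq> V" "v \<notin> K"
      using sp \<open>v \<in> I\<close> unfolding split_graph_def by auto
    ultimately have "card (insert v K) \<le> card K"
      using card_le_clique_number[OF split_graph_finite(1)[OF sp]] ba
      unfolding balanced_def by metis
    with \<open>v \<notin> K\<close> show False using split_graph_finite(2)[OF sp] by simp
  qed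
  then show thesis
    using sp that unfolding split_graph_def simple_graph_def is_clique_def by blast
qed

lemma balanced_obtain_neighbour_in_I:
  assumes sp: "split_graph V E K I" and ba: "balanced V E K I" and "k \<in> K"
  obtains i where "i \<in> I" "E k i"
proof -
  have "\<not> is_indep E (insert k I)"
  proof
    assume "is_indep E (insert k I)"
    moreover have "insert k I \<subseteq> V" "k \<notin> I"
      using sp \<open>k \<in> K\<close> unfolding split_graph_def by auto
    ultimately have "card (insert k I) \<le> card I"
      using card_le_indep_number[OF split_graph_finite(1)[OF sp]] ba
      unfolding balanced_def by metis
    with \<open>k \<notin> I\<close> show False using split_graph_finite(3)[OF sp] by simp
  qed
  then show thesis
    using sp that unfolding split_graph_def simple_graph_def is_indep_def by blast
qed

lemma balanced_obtain_distinguishing_vertex: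
  assumes sp: "split_graph V E K I" and ba: "balanced V E K I" and "V \<noteq> {}"
  obtains v i k where "v \<in> I" "i \<in> I" "k \<in> K" "k \<notin> nbhd V E v" "k \<in> nbhd V E i"
proof -
  have "I \<noteq> {}"
  proof
    assume "I = {}"
    then obtain k where "k \<in> K" using sp \<open>V \<noteq> {}\<close> unfolding split_graph_def by auto
    then show False using balanced_obtain_neighbour_in_I[OF sp ba] \<open>I = {}\<close> by blast
  qed
  then obtain v where "v \<in> I" by blast
  obtain k where "k \<in> K" "\<not> E v k" using balanced_obtain_non_neighbour_in_K[OF sp ba \<open>v \<in> I\<close>] .
  obtain i where "i \<in> I" "E k i" using balanced_obtain_neighbour_in_I[OF sp ba \<open>k \<in> K\<close>] .
  have "k \<in> V" "E i k" using sp \<open>k \<in> K\<close> \<open>E k i\<close> unfolding split_graph_def simple_graph_def by auto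
  with \<open>\<not> E v k\<close> show thesis
    using that[OF \<open>v \<in> I\<close> \<open>i \<in> I\<close> \<open>k \<in> K\<close>] unfolding nbhd_def by blast
qed

lemma balanced_exists_distinct_nbhds:
  assumes "split_graph V E K I" "balanced V E K I" "V \<noteq> {}"
  shows "\<exists>a\<in>I. \<exists>b\<in>I. nbhd V E a \<noteq> nbhd V E b"
  using balanced_obtain_distinguishing_vertex[OF assms] by metis

lemma balanced_common_degree_bounds:
  assumes sp: "split_graph V E K I" and "balanced V E K I" "V \<noteq> {}"
    and d: "\<forall>v\<in>I. vdeg V E v = d"
  shows "0 < d" "d < card K"
proof -
  obtain v i k where vik: "v \<in> I" "i \<in> I" "k \<in> K" "k \<notin> nbhd V E v" "k \<in> nbhd V E i"
    using balanced_obtain_distinguishing_vertex[OF assms(1-3)] .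
  have "vdeg V E i \<noteq> 0" "vdeg V E v < card K"
    using vik split_graph_finite[OF sp] split_graph_finite_nbhd[OF sp]
      split_graph_nbhd_subset_K[OF sp] unfolding vdeg_def
    by (auto intro: psubset_card_mono)
  then show "0 < d" "d < card K" using d vik by auto
qed

lemma split_graph_P4_through_indep_pair:
  assumes sp: "split_graph V E K I" and X: "X \<in> P4_sets V E"
    and "u \<in> X" "v \<in> X" "u \<in> I" "v \<in> I" "u \<noteq> v"
  obtains x y where "x \<in> nbhd V E u - nbhd V E v" "y \<in> nbhd V E v - nbhd V E u"
    "X = {u, x, y, v}"
proof -
  from X obtain a b c d where XV: "X \<subseteq> V" and Xe: "X = {a, b, c, d}"
    and ds: "distinct [a, b, c, d]"
    and e: "E a b" "E b c" "E c d" "\<not> E a c" "\<not> E a d" "\<not> E b d"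
    unfolding P4_sets_def induces_P4_def by blast
  have V: "V = K \<union> I" "K \<inter> I = {}" and cl: "is_clique E K" and ind: "is_indep E I"
    and sym: "\<And>x y. E x y \<Longrightarrow> E y x"
    using sp unfolding split_graph_def simple_graph_def by auto
  have abcd: "a \<in> V" "b \<in> V" "c \<in> V" "d \<in> V" using XV Xe by auto
  have aI: "a \<in> I"
  proof (rule ccontr)
    assume "a \<notin> I"
    then have "c \<notin> K" "d \<notin> K" using abcd V e(4,5) cl ds unfolding is_clique_def by auto
    then show False using abcd V e(3) ind unfolding is_indep_def by auto
  qed
  have dI: "d \<in> I"
  proof (rule ccontr)
    assume "d \<notin> I"
    then have "a \<notin> K" "b \<notin> K" using abcd V e(5,6) cl ds unfolding is_clique_def by auto
    then show False using abcd V e(1) ind unfolding is_indep_def by auto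
  qed
  have "b \<in> K" "c \<in> K" using aI dI e(1,3) ind abcd V unfolding is_indep_def by auto
  then have "(u = a \<and> v = d) \<or> (u = d \<and> v = a)"
    using assms(3-7) Xe V by auto
  then show thesis
  proof
    assume "u = a \<and> v = d"
    then show thesis using that[of b c] e abcd sym Xe unfolding nbhd_def by auto
  next
    assume "u = d \<and> v = a"
    then show thesis using that[of c b] e abcd sym Xe unfolding nbhd_def by auto
  qed
qed

lemma split_graph_P4_of_private_neighbours:
  assumes sp: "split_graph V E K I" and "u \<in> I" "v \<in> I" "u \<noteq> v"
    and x: "x \<in> nbhd V E u - nbhd V E v" and y: "y \<in> nbhd V E v - nbhd V E u"
  shows "{u, x, y, v} \<in> P4_sets V E"
proof -
  have V: "V = K \<union> I" "K \<inter> I = {}" and cl: "is_clique E K" and ind: "is_indep E I"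
    and sym: "\<And>x y. E x y \<Longrightarrow> E y x"
    using sp unfolding split_graph_def simple_graph_def by auto
  have "x \<in> K" "y \<in> K" using x y split_graph_nbhd_subset_K[OF sp] assms(2,3) by auto
  moreover have "x \<noteq> y" using x y by auto
  ultimately have "E x y" "x \<notin> I" "y \<notin> I" using cl V unfolding is_clique_def by auto
  moreover have "E u x" "E v y" "\<not> E u y" "\<not> E v x" "x \<in> V" "y \<in> V"
    using x y unfolding nbhd_def by auto
  moreover have "\<not> E u v" using ind assms(2,3) unfolding is_indep_def by auto
  ultimately have "induces_P4 E {u, x, y, v}"
    unfolding induces_P4_def using assms(2-4) sym
    by (intro exI[of _ u] exI[of _ x] exI[of _ y] exI[of _ v]) auto
  then show ?thesis using assms(2,3) V \<open>x \<in> V\<close> \<open>y \<in> V\<close> unfolding P4_sets_def by auto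
qed

lemma sigma_eq_card_private_nbhds:
  assumes sp: "split_graph V E K I" and "u \<in> I" "v \<in> I" "u \<noteq> v"
  shows "sigma V E u v = card (nbhd V E u - nbhd V E v) * card (nbhd V E v - nbhd V E u)"
proof -
  let ?A = "nbhd V E u - nbhd V E v" and ?B = "nbhd V E v - nbhd V E u"
  let ?path = "\<lambda>(x, y). {u, x, y, v}"
  have "?path ` (?A \<times> ?B) = {X \<in> P4_sets V E. u \<in> X \<and> v \<in> X}"
  proof
    show "?path ` (?A \<times> ?B) \<subseteq> {X \<in> P4_sets V E. u \<in> X \<and> v \<in> X}"
      using split_graph_P4_of_private_neighbours[OF assms] by auto
    show "{X \<in> P4_sets V E. u \<in> X \<and> v \<in> X} \<subseteq> ?path ` (?A \<times> ?B)"
    proof clarify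
      fix X assume "X \<in> P4_sets V E" "u \<in> X" "v \<in> X"
      then obtain x y where "x \<in> ?A" "y \<in> ?B" "X = {u, x, y, v}"
        using split_graph_P4_through_indep_pair[OF sp _ _ _ assms(2-4)] by metis
      then show "X \<in> ?path ` (?A \<times> ?B)" by force
    qed
  qed
  moreover have "x = x' \<and> y = y'"
    if xy: "x \<in> ?A" "y \<in> ?B" "x' \<in> ?A" "y' \<in> ?B" and eq: "{u, x, y, v} = {u, x', y', v}"
    for x y x' y'
  proof -
    have "nbhd V E u \<union> nbhd V E v \<subseteq> K" "K \<inter> I = {}"
      using split_graph_nbhd_subset_K[OF sp] assms(2,3) sp unfolding split_graph_def by auto
    then have "x \<notin> {u, v}" "y \<notin> {u, v}" using xy assms(2,3) by auto
    with eq have "x \<in> {x', y'}" "y \<in> {x', y'}" by auto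
    with xy show ?thesis by auto
  qed
  then have "inj_on ?path (?A \<times> ?B)" by (intro inj_onI) auto
  ultimately have "sigma V E u v = card (?A \<times> ?B)"
    unfolding sigma_def using card_image by fastforce
  then show ?thesis by (simp add: card_cartesian_product)
qed

lemma sigma_le_split_deg:
  assumes "finite V"
  shows "sigma V E u v \<le> split_deg V E"
  unfolding sigma_def split_deg_def P4_sets_def using assms
  by (intro card_mono) (auto intro: finite_subset[of _ "Pow V"])

lemma card_Diff_commute:
  assumes "finite A" "finite B" "card A = card B"
  shows "card (A - B) = card (B - A)"
  using assms card_Diff_subset_Int[of A B] card_Diff_subset_Int[of B A]
  by (simp add: Int_commute)

lemma homogeneous_sigma_eq_square:
  assumes sp: "split_graph V E K I" and ho: "homogeneous V E K I"
    and "u \<in> I" "v \<in> I" "u \<noteq> v"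
  shows "sigma V E u v = card (nbhd V E u - nbhd V E v) ^ 2"
proof -
  have "card (nbhd V E u) = card (nbhd V E v)"
    using ho assms(3,4) unfolding homogeneous_def vdeg_def by metis
  then have "card (nbhd V E v - nbhd V E u) = card (nbhd V E u - nbhd V E v)"
    using card_Diff_commute split_graph_finite_nbhd[OF sp] by metis
  then show ?thesis
    using sigma_eq_card_private_nbhds[OF sp assms(3-5)] by (simp add: power2_eq_square)
qed

lemma homogeneous_sigma_eq_0_iff:
  assumes sp: "split_graph V E K I" and ho: "homogeneous V E K I"
    and "u \<in> I" "v \<in> I" "u \<noteq> v"
  shows "sigma V E u v = 0 \<longleftrightarrow> nbhd V E u = nbhd V E v"
proof -
  have "card (nbhd V E u) = card (nbhd V E v)"
    using ho assms(3,4) unfolding homogeneous_def vdeg_def by metis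
  then have "nbhd V E u \<subseteq> nbhd V E v \<longleftrightarrow> nbhd V E u = nbhd V E v"
    using card_subset_eq[of "nbhd V E v" "nbhd V E u"] split_graph_finite_nbhd[OF sp] by auto
  moreover have "sigma V E u v = 0 \<longleftrightarrow> nbhd V E u \<subseteq> nbhd V E v"
    using homogeneous_sigma_eq_square[OF assms] split_graph_finite_nbhd[OF sp] by auto
  ultimately show ?thesis by simp
qed

lemma homogeneous_phi_adj_iff:
  assumes sp: "split_graph V E K I" and ho: "homogeneous V E K I" and "u \<in> I" "v \<in> I"
  shows "phi_adj V E u v \<longleftrightarrow> u \<noteq> v \<and> nbhd V E u \<noteq> nbhd V E v"
  using homogeneous_sigma_eq_0_iff[OF sp ho assms(3,4)] unfolding phi_adj_def by auto

lemma split_graph_twins_iff: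
  assumes sp: "split_graph V E K I" and "u \<in> I" "v \<in> I"
  shows "twins V E u v \<longleftrightarrow> nbhd V E u = nbhd V E v"
proof -
  have "v \<notin> nbhd V E u" "u \<notin> nbhd V E v"
    using split_graph_nbhd_subset_K[OF sp] assms sp unfolding split_graph_def by blast+
  then show ?thesis unfolding twins_def by auto
qed

text \<open>The adjacency \<open>x \<noteq> y \<and> f x \<noteq> f y\<close> is that of the complete multipartite graph whose
parts are the fibres of \<open>f\<close>.\<close>

lemma complete_multipartite_no_induced_K2_K1:
  assumes adj: "\<And>x y. x \<in> S \<Longrightarrow> y \<in> S \<Longrightarrow> A x y \<longleftrightarrow> x \<noteq> y \<and> f x \<noteq> f y"
  shows "\<not> (\<exists>x\<in>S. \<exists>y\<in>S. \<exists>z\<in>S. distinct [x, y, z] \<and> A x y \<and> \<not> A x z \<and> \<not> A y z)"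
  using adj by auto

lemma complete_multipartite_distance_le_2:
  assumes adj: "\<And>x y. x \<in> S \<Longrightarrow> y \<in> S \<Longrightarrow> A x y \<longleftrightarrow> x \<noteq> y \<and> f x \<noteq> f y"
    and two_parts: "a \<in> S" "b \<in> S" "f a \<noteq> f b"
    and "u \<in> S" "v \<in> S" "u \<noteq> v"
  shows "A u v \<or> (\<exists>w\<in>S. A u w \<and> A w v)"
  using assms by metis

lemma complete_multipartite_no_long_induced_cycle:
  assumes adj: "\<And>x y. x \<in> S \<Longrightarrow> y \<in> S \<Longrightarrow> A x y \<longleftrightarrow> x \<noteq> y \<and> f x \<noteq> f y"
    and "set cs \<subseteq> S" and cyc: "induced_cycle A cs"
  shows "length cs \<le> 4"
proof (rule ccontr)
  assume "\<not> length cs \<le> 4"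
  then have n: "length cs \<ge> 5" by simp
  let ?n = "length cs"
  have ic: "\<And>i j. i < ?n \<Longrightarrow> j < ?n \<Longrightarrow> i \<noteq> j \<Longrightarrow>
      A (cs ! i) (cs ! j) \<longleftrightarrow> j = Suc i mod ?n \<or> i = Suc j mod ?n"
    using cyc unfolding induced_cycle_def by auto
  have lt: "0 < ?n" "2 < ?n" "3 < ?n" using n by auto
  then have in_S: "cs ! 0 \<in> S" "cs ! 2 \<in> S" "cs ! 3 \<in> S"
    using \<open>set cs \<subseteq> S\<close> nth_mem by blast+
  have "Suc 0 mod ?n = 1" "Suc 2 mod ?n = 3" "Suc 3 mod ?n = 4" using n by auto
  then have "\<not> A (cs ! 0) (cs ! 2)" "\<not> A (cs ! 0) (cs ! 3)" "A (cs ! 2) (cs ! 3)"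
    using ic[OF lt(1,2)] ic[OF lt(1,3)] ic[OF lt(2,3)] by auto
  moreover have "cs ! 0 \<noteq> cs ! 2" "cs ! 0 \<noteq> cs ! 3"
    using cyc n nth_eq_iff_index_eq unfolding induced_cycle_def by fastforce+
  ultimately show False using adj in_S by metis
qed

theorem theorem3p2:
  fixes V K I :: "'a set" and E :: "'a \<Rightarrow> 'a \<Rightarrow> bool"
  assumes split: "split_graph V E K I"
    and nonempty: "V \<noteq> {}"
    and homog: "homogeneous V E K I"
  shows "(\<forall>u\<in>I. \<forall>v\<in>I. u \<noteq> v \<longrightarrow> (sigma V E u v = 0 \<longleftrightarrow> twins V E u v))
    \<and> (\<forall>u\<in>I. \<forall>v\<in>I. u \<noteq> v \<longrightarrow> (\<exists>k::nat. sigma V E u v = k ^ 2))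
    \<and> split_deg V E \<ge> 1
    \<and> (\<forall>d. (\<forall>v\<in>I. vdeg V E v = d) \<longrightarrow> d \<noteq> 0 \<and> d \<noteq> card K)
    \<and> \<not> (\<exists>x\<in>I. \<exists>y\<in>I. \<exists>z\<in>I. distinct [x, y, z] \<and> phi_adj V E x y
              \<and> \<not> phi_adj V E x z \<and> \<not> phi_adj V E y z)
    \<and> (\<forall>u\<in>I. \<forall>v\<in>I. u \<noteq> v \<longrightarrow>
           phi_adj V E u v \<or> (\<exists>w\<in>I. phi_adj V E u w \<and> phi_adj V E w v))
    \<and> \<not> (\<exists>cs. set cs \<subseteq> I \<and> length cs \<ge> 5 \<and> induced_cycle (phi_adj V E) cs)"
proof -
  note phi = homogeneous_phi_adj_iff[OF split homog]
  have balanced: "balanced V E K I" using homog unfolding homogeneous_def ..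
  obtain a b where ab: "a \<in> I" "b \<in> I" "nbhd V E a \<noteq> nbhd V E b"
    using balanced_exists_distinct_nbhds[OF split balanced nonempty] by blast
  have "1 \<le> sigma V E a b" using ab phi unfolding phi_adj_def by blast
  also have "\<dots> \<le> split_deg V E" using sigma_le_split_deg split_graph_finite(1)[OF split] .
  finally have "split_deg V E \<ge> 1" .
  moreover have "\<forall>u\<in>I. \<forall>v\<in>I. u \<noteq> v \<longrightarrow> (sigma V E u v = 0 \<longleftrightarrow> twins V E u v)"
    using homogeneous_sigma_eq_0_iff[OF split homog] split_graph_twins_iff[OF split] by simp
  moreover have "\<forall>u\<in>I. \<forall>v\<in>I. u \<noteq> v \<longrightarrow> (\<exists>k::nat. sigma V E u v = k ^ 2)"
    using homogeneous_sigma_eq_square[OF split homog] by blast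
  moreover have "\<forall>d. (\<forall>v\<in>I. vdeg V E v = d) \<longrightarrow> d \<noteq> 0 \<and> d \<noteq> card K"
    using balanced_common_degree_bounds[OF split balanced nonempty] by fastforce
  moreover have "\<forall>u\<in>I. \<forall>v\<in>I. u \<noteq> v \<longrightarrow>
      phi_adj V E u v \<or> (\<exists>w\<in>I. phi_adj V E u w \<and> phi_adj V E w v)"
    using complete_multipartite_distance_le_2[OF phi ab] by blast
  moreover have "\<not> (\<exists>cs. set cs \<subseteq> I \<and> length cs \<ge> 5 \<and> induced_cycle (phi_adj V E) cs)"
    using complete_multipartite_no_long_induced_cycle[OF phi] by fastforce
  ultimately show ?thesis
    using complete_multipartite_no_induced_K2_K1[OF phi] by (intro conjI) assumption+
qed

end
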